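(* Let $(X,\|\cdot\|)$ be a real Banach space and $C\subseteq B_X$ a nonempty absolutely convex closed subset such that every convex combination of slices of $C$ has $\|\cdot\|$-diameter $2$. Then for every $\varepsilon>0$ there is an equivalent norm $|\cdot|$ on $X$ such that every convex combination of slices of $B_{(X,|\cdot|)}$ has $|\cdot|$-diameter at least $2-\varepsilon$.
   Context: For a bounded set $A$ in a Banach space, a slice of $A$ is a nonempty set of the form $S(A,f,\alpha)=\{a\in A: f(a)>\sup_Af-\alpha\}$ with $f$ a nonzero continuous linear functional and $\alpha>0$. A convex combination of slices of $A$ is a Minkowski sum $\sum_{i=1}^n\lambda_iS_i=\{\sum_i\lambda_is_i: s_i\in S_i\}$ with $S_i$ slices of $A$, $\lambda_i>0$, $\sum_i\lambda_i=1$. Absolutely convex means convex and symmetric ($C=-C$). *)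

theory Defs
  imports "HOL-Analysis.Analysis"
begin

definition slice :: "'a set \<Rightarrow> ('a \<Rightarrow> real) \<Rightarrow> real \<Rightarrow> 'a set" where
  "slice A f \<alpha> = {a \<in> A. f a > (SUP x\<in>A. f x) - \<alpha>}"

definition is_slice :: "'a::real_normed_vector set \<Rightarrow> 'a set \<Rightarrow> bool" where
  "is_slice A S \<longleftrightarrow> (\<exists>f \<alpha>. bounded_linear f \<and> f \<noteq> (\<lambda>_. 0) \<and> \<alpha> > 0 \<and>
      S = slice A f \<alpha> \<and> S \<noteq> {})"

definition is_ccs :: "'a::real_normed_vector set \<Rightarrow> 'a set \<Rightarrow> bool" where
  "is_ccs A D \<longleftrightarrow> (\<exists>n::nat. \<exists>l::nat \<Rightarrow> real. \<exists>S::nat \<Rightarrow> 'a set.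
      n \<ge> 1 \<and> (\<forall>i<n. l i > 0 \<and> is_slice A (S i)) \<and> (\<Sum>i<n. l i) = 1 \<and>
      D = {(\<Sum>i<n. l i *\<^sub>R s i) | s. \<forall>i<n. s i \<in> S i})"

definition is_norm :: "('a::real_vector \<Rightarrow> real) \<Rightarrow> bool" where
  "is_norm N \<longleftrightarrow> (\<forall>x. N x \<ge> 0) \<and> (\<forall>x. N x = 0 \<longleftrightarrow> x = 0) \<and>
     (\<forall>c x. N (c *\<^sub>R x) = \<bar>c\<bar> * N x) \<and> (\<forall>x y. N (x + y) \<le> N x + N y)"

definition equiv_norm :: "('a::real_normed_vector \<Rightarrow> real) \<Rightarrow> bool" where
  "equiv_norm N \<longleftrightarrow> is_norm N \<and>
     (\<exists>a b. 0 < a \<and> 0 < b \<and> (\<forall>x. a * norm x \<le> N x \<and> N x \<le> b * norm x))"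

definition ndiam :: "('a::real_vector \<Rightarrow> real) \<Rightarrow> 'a set \<Rightarrow> real" where
  "ndiam N S = (SUP p\<in>S \<times> S. N (fst p - snd p))"

end

theory Submission imports Defs begin

text \<open>
  Renorm \<open>X\<close> by the Minkowski functional of \<open>B = C + \<delta> B\<^sub>X\<close>. Its unit ball lies between \<open>B\<close>
  and the closure of \<open>B\<close>, so every functional \<open>f\<close> has the same supremum on it as on \<open>B\<close>, at most
  \<open>sup\<^sub>C f + sup\<^bsub>\<delta> B\<^sub>X\<^esub> f\<close>. Hence each slice of the new ball contains \<open>T + u\<close> for a slice \<open>T\<close>
  of \<open>C\<close> and a single \<open>u\<close>, and each convex combination of slices of the new ball contains a
  translate of a convex combination of slices of \<open>C\<close>, whose \<open>\<parallel>\<cdot>\<parallel>\<close>-diameter is \<open>2\<close>. Since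
  \<open>\<parallel>\<cdot>\<parallel> \<le> (1 + \<delta>) \<bar>\<cdot>\<bar>\<close>, the new diameter is at least \<open>2 / (1 + \<delta>) \<ge> 2 - \<epsilon>\<close> for \<open>\<delta> = \<epsilon> / 2\<close>.
\<close>

definition dilations_containing :: "'a::real_vector set \<Rightarrow> 'a \<Rightarrow> real set" where
  "dilations_containing B x = {t. 0 < t \<and> (\<exists>b\<in>B. x = t *\<^sub>R b)}"

definition minkowski_functional :: "'a::real_vector set \<Rightarrow> 'a \<Rightarrow> real" where
  "minkowski_functional B x = Inf (dilations_containing B x)"

lemma bdd_below_dilations_containing: "bdd_below (dilations_containing B x)"
  unfolding bdd_below_def dilations_containing_def by (rule exI[of _ 0]) auto

lemma minkowski_functional_le: "t \<in> dilations_containing B x \<Longrightarrow> minkowski_functional B x \<le> t"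
  unfolding minkowski_functional_def by (rule cInf_lower[OF _ bdd_below_dilations_containing])

lemma mem_dilations_containing_scaleR:
  assumes "t \<in> dilations_containing B x" "c \<noteq> 0" "\<And>b. b \<in> B \<Longrightarrow> - b \<in> B"
  shows "\<bar>c\<bar> * t \<in> dilations_containing B (c *\<^sub>R x)"
proof -
  obtain b where "0 < t" "b \<in> B" "x = t *\<^sub>R b"
    using assms(1) by (auto simp: dilations_containing_def)
  moreover have "sgn c *\<^sub>R b \<in> B" using \<open>b \<in> B\<close> assms(2,3) by (auto simp: sgn_if)
  moreover have "c *\<^sub>R x = (\<bar>c\<bar> * t) *\<^sub>R (sgn c *\<^sub>R b)"
    using \<open>x = t *\<^sub>R b\<close> by (simp add: sgn_if abs_if)
  moreover have "0 < \<bar>c\<bar> * t" using \<open>0 < t\<close> assms(2) by simp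
  ultimately show ?thesis unfolding dilations_containing_def by blast
qed

lemma mem_dilations_containing_add:
  assumes "convex B" "s \<in> dilations_containing B x" "t \<in> dilations_containing B y"
  shows "s + t \<in> dilations_containing B (x + y)"
proof -
  obtain b1 b2 where "0 < s" "0 < t" "b1 \<in> B" "b2 \<in> B" "x = s *\<^sub>R b1" "y = t *\<^sub>R b2"
    using assms(2,3) by (auto simp: dilations_containing_def)
  moreover have "(s / (s + t)) *\<^sub>R b1 + (t / (s + t)) *\<^sub>R b2 \<in> B"
    using convexD[OF assms(1) \<open>b1 \<in> B\<close> \<open>b2 \<in> B\<close>, of "s / (s + t)" "t / (s + t)"] \<open>0 < s\<close> \<open>0 < t\<close>
    by (simp add: add_divide_distrib[symmetric])
  moreover have "x + y = (s + t) *\<^sub>R ((s / (s + t)) *\<^sub>R b1 + (t / (s + t)) *\<^sub>R b2)"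
    using \<open>x = s *\<^sub>R b1\<close> \<open>y = t *\<^sub>R b2\<close> \<open>0 < s\<close> \<open>0 < t\<close> by (simp add: scaleR_add_right)
  ultimately show ?thesis unfolding dilations_containing_def by (auto intro: add_pos_pos)
qed

locale symmetric_convex_body =
  fixes B :: "'a::real_normed_vector set" and r R :: real
  assumes convex: "convex B" and symmetric: "\<And>b. b \<in> B \<Longrightarrow> - b \<in> B"
    and r_pos: "0 < r" and R_pos: "0 < R"
    and cball_subset: "cball 0 r \<subseteq> B" and subset_cball: "B \<subseteq> cball 0 R"
begin

lemma zero_mem: "0 \<in> B"
  using cball_subset r_pos by auto

lemma norm_less_imp_mem_dilations_containing:
  assumes "norm x < t * r"
  shows "t \<in> dilations_containing B x"
proof -
  have "0 < t" using assms r_pos by (metis norm_ge_zero le_less_trans zero_less_mult_pos2)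
  have "(1 / t) *\<^sub>R x \<in> B"
    using assms \<open>0 < t\<close> cball_subset by (auto simp: field_simps)
  moreover have "x = t *\<^sub>R ((1 / t) *\<^sub>R x)" using \<open>0 < t\<close> by simp
  ultimately show ?thesis using \<open>0 < t\<close> unfolding dilations_containing_def by blast
qed

lemma mem_dilations_containing_imp_norm_le:
  assumes "t \<in> dilations_containing B x"
  shows "norm x \<le> t * R"
proof -
  obtain b where "0 < t" "b \<in> B" "x = t *\<^sub>R b"
    using assms by (auto simp: dilations_containing_def)
  then show ?thesis using subset_cball by (auto intro: mult_left_mono)
qed

lemma dilations_containing_nonempty: "dilations_containing B x \<noteq> {}"
  using norm_less_imp_mem_dilations_containing[of x "norm x / r + 1"] r_pos
  by (auto simp: field_simps)

lemma le_minkowski_functional: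
  "(\<And>t. t \<in> dilations_containing B x \<Longrightarrow> a \<le> t) \<Longrightarrow> a \<le> minkowski_functional B x"
  unfolding minkowski_functional_def by (rule cInf_greatest[OF dilations_containing_nonempty])

lemma norm_div_le_minkowski_functional: "norm x / R \<le> minkowski_functional B x"
  using mem_dilations_containing_imp_norm_le R_pos by (intro le_minkowski_functional) (simp add: divide_le_eq)

lemma minkowski_functional_le_norm_div: "minkowski_functional B x \<le> norm x / r"
proof (rule dense_ge)
  fix t assume "norm x / r < t"
  then show "minkowski_functional B x \<le> t"
    using r_pos by (intro minkowski_functional_le norm_less_imp_mem_dilations_containing)
      (simp add: divide_less_eq)
qed

lemma minkowski_functional_nonneg: "0 \<le> minkowski_functional B x"
  using norm_div_le_minkowski_functional[of x] R_pos by (meson divide_nonneg_pos norm_ge_zero order_trans)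

lemma minkowski_functional_eq_0_iff: "minkowski_functional B x = 0 \<longleftrightarrow> x = 0"
proof
  assume "minkowski_functional B x = 0"
  then show "x = 0" using norm_div_le_minkowski_functional[of x] R_pos by (simp add: divide_le_0_iff)
next
  assume "x = 0"
  then show "minkowski_functional B x = 0"
    using minkowski_functional_le_norm_div[of x] minkowski_functional_nonneg[of x] by simp
qed

lemma minkowski_functional_scaleR_le:
  "minkowski_functional B (c *\<^sub>R x) \<le> \<bar>c\<bar> * minkowski_functional B x"
proof (cases "c = 0")
  case True
  then show ?thesis using minkowski_functional_eq_0_iff[of 0] by simp
next
  case False
  have "minkowski_functional B (c *\<^sub>R x) / \<bar>c\<bar> \<le> minkowski_functional B x"
  proof (rule le_minkowski_functional)
    fix t assume "t \<in> dilations_containing B x"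
    then have "minkowski_functional B (c *\<^sub>R x) \<le> \<bar>c\<bar> * t"
      using False symmetric by (intro minkowski_functional_le mem_dilations_containing_scaleR)
    then show "minkowski_functional B (c *\<^sub>R x) / \<bar>c\<bar> \<le> t"
      using False by (simp add: divide_le_eq mult.commute)
  qed
  then show ?thesis using False by (simp add: divide_le_eq mult.commute)
qed

lemma minkowski_functional_scaleR:
  "minkowski_functional B (c *\<^sub>R x) = \<bar>c\<bar> * minkowski_functional B x"
proof (cases "c = 0")
  case True
  then show ?thesis using minkowski_functional_eq_0_iff by simp
next
  case False
  have "minkowski_functional B x \<le> \<bar>1 / c\<bar> * minkowski_functional B (c *\<^sub>R x)"
    using minkowski_functional_scaleR_le[of "1 / c" "c *\<^sub>R x"] False by simp
  then show ?thesis
    using minkowski_functional_scaleR_le[of c x] False by (simp add: field_simps)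
qed

lemma minkowski_functional_triangle:
  "minkowski_functional B (x + y) \<le> minkowski_functional B x + minkowski_functional B y"
proof -
  have "minkowski_functional B (x + y) - minkowski_functional B y \<le> minkowski_functional B x"
  proof (rule le_minkowski_functional)
    fix s assume s: "s \<in> dilations_containing B x"
    have "minkowski_functional B (x + y) - s \<le> minkowski_functional B y"
    proof (rule le_minkowski_functional)
      fix t assume "t \<in> dilations_containing B y"
      then have "minkowski_functional B (x + y) \<le> s + t"
        by (intro minkowski_functional_le mem_dilations_containing_add[OF convex s])
      then show "minkowski_functional B (x + y) - s \<le> t" by simp
    qed
    then show "minkowski_functional B (x + y) - minkowski_functional B y \<le> s" by simp
  qed
  then show ?thesis by simp
qed

lemma equiv_norm_minkowski_functional: "equiv_norm (minkowski_functional B)"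
proof -
  have "is_norm (minkowski_functional B)"
    unfolding is_norm_def
    using minkowski_functional_nonneg minkowski_functional_eq_0_iff minkowski_functional_scaleR
      minkowski_functional_triangle
    by blast
  moreover have "\<forall>x. 1 / R * norm x \<le> minkowski_functional B x \<and>
      minkowski_functional B x \<le> 1 / r * norm x"
    using norm_div_le_minkowski_functional minkowski_functional_le_norm_div by simp
  ultimately show ?thesis
    unfolding equiv_norm_def using r_pos R_pos by (intro conjI exI[of _ "1 / R"] exI[of _ "1 / r"]) auto
qed

lemma minkowski_functional_le_1: "b \<in> B \<Longrightarrow> minkowski_functional B b \<le> 1"
  by (rule minkowski_functional_le) (auto simp: dilations_containing_def intro: bexI[of _ b])

lemma minkowski_functional_less_1_imp_mem:
  assumes "minkowski_functional B x < 1"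
  shows "x \<in> B"
proof -
  obtain t where "t \<in> dilations_containing B x" "t < 1"
    using cInf_lessD[OF dilations_containing_nonempty] assms
    unfolding minkowski_functional_def by blast
  then obtain b where "0 < t" "b \<in> B" "x = t *\<^sub>R b"
    by (auto simp: dilations_containing_def)
  then show ?thesis
    using convexD[OF convex \<open>b \<in> B\<close> zero_mem, of t "1 - t"] \<open>t < 1\<close> by simp
qed

lemma SUP_minkowski_ball_le:
  fixes f :: "'a \<Rightarrow> real"
  assumes "bounded_linear f"
  shows "(SUP x\<in>{x. minkowski_functional B x \<le> 1}. f x) \<le> (SUP b\<in>B. f b)"
proof (rule cSUP_least)
  show "{x. minkowski_functional B x \<le> 1} \<noteq> {}"
    using minkowski_functional_le_1[OF zero_mem] by blast
next
  fix x assume x: "x \<in> {x. minkowski_functional B x \<le> 1}"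
  show "f x \<le> (SUP b\<in>B. f b)"
  proof (rule field_le_mult_one_interval)
    fix z :: real assume "0 < z" "z < 1"
    have "minkowski_functional B (z *\<^sub>R x) \<le> z"
      using x \<open>0 < z\<close> mult_left_mono[of "minkowski_functional B x" 1 z]
      by (simp add: minkowski_functional_scaleR)
    then have "z *\<^sub>R x \<in> B"
      using \<open>z < 1\<close> by (intro minkowski_functional_less_1_imp_mem) simp
    moreover have "bdd_above (f ` B)"
      using bounded_linear_image[OF bounded_subset[OF bounded_cball subset_cball] assms]
      by (rule bounded_imp_bdd_above)
    ultimately have "f (z *\<^sub>R x) \<le> (SUP b\<in>B. f b)"
      by (rule cSUP_upper)
    then show "z * f x \<le> (SUP b\<in>B. f b)"
      using assms by (simp add: linear_simps)
  qed
qed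

end

lemma convex_norm_ball:
  assumes "is_norm N"
  shows "convex {x. N x \<le> 1}"
proof (rule convexI)
  fix x y :: 'a and u v :: real
  assume "x \<in> {x. N x \<le> 1}" "y \<in> {x. N x \<le> 1}" "0 \<le> u" "0 \<le> v" "u + v = 1"
  moreover have "N (u *\<^sub>R x + v *\<^sub>R y) \<le> u * N x + v * N y"
    using assms \<open>0 \<le> u\<close> \<open>0 \<le> v\<close> unfolding is_norm_def by (metis abs_of_nonneg)
  moreover have "u * N x \<le> u" "v * N y \<le> v"
    using calculation by (simp_all add: mult_left_le)
  ultimately show "u *\<^sub>R x + v *\<^sub>R y \<in> {x. N x \<le> 1}"
    by simp
qed

lemma is_norm_minus: "is_norm N \<Longrightarrow> N (- x) = N x"
  unfolding is_norm_def by (metis abs_minus_cancel abs_one mult_1 scaleR_minus1_left)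

lemma bdd_above_norm_diffs:
  assumes "is_norm N" "D \<subseteq> {x. N x \<le> 1}"
  shows "bdd_above ((\<lambda>p. N (fst p - snd p)) ` (D \<times> D))"
proof (rule bdd_aboveI2)
  fix p assume "p \<in> D \<times> D"
  then have "N (fst p) \<le> 1" "N (- snd p) \<le> 1"
    using assms is_norm_minus[OF assms(1), of "snd p"] by auto
  moreover have "N (fst p - snd p) \<le> N (fst p) + N (- snd p)"
    using assms unfolding is_norm_def by (metis diff_conv_add_uminus)
  ultimately show "N (fst p - snd p) \<le> 2" by simp
qed

lemma is_ccsE:
  assumes "is_ccs A D"
  obtains n :: nat and l S
  where "1 \<le> n" "\<And>i. i < n \<Longrightarrow> 0 < l i" "\<And>i. i < n \<Longrightarrow> is_slice A (S i)"
    "(\<Sum>i<n. l i) = 1" "D = {(\<Sum>i<n. l i *\<^sub>R s i) | s. \<forall>i<n. s i \<in> S i}"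
proof -
  obtain n :: nat and l S where "1 \<le> n" "\<forall>i<n. 0 < l i \<and> is_slice A (S i)" "(\<Sum>i<n. l i) = 1"
    "D = {(\<Sum>i<n. l i *\<^sub>R s i) | s. \<forall>i<n. s i \<in> S i}"
    using assms unfolding is_ccs_def by blast
  then show thesis by (intro that[of n l S]) auto
qed

lemma ccs_nonempty:
  assumes "is_ccs A D"
  shows "D \<noteq> {}"
proof -
  obtain n :: nat and l S where "\<And>i. i < n \<Longrightarrow> is_slice A (S i)"
    and D: "D = {(\<Sum>i<n. l i *\<^sub>R s i) | s. \<forall>i<n. s i \<in> S i}"
    using assms by (blast elim: is_ccsE)
  then have "\<forall>i\<in>{..<n}. \<exists>x. x \<in> S i"
    unfolding is_slice_def by blast
  then obtain s where "\<forall>i\<in>{..<n}. s i \<in> S i"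
    by (auto dest: bchoice)
  then show ?thesis unfolding D by blast
qed

lemma ccs_subset_convex:
  assumes "is_ccs A D" "convex A"
  shows "D \<subseteq> A"
proof
  fix z assume "z \<in> D"
  obtain n :: nat and l S where l: "\<And>i. i < n \<Longrightarrow> 0 < l i" "(\<Sum>i<n. l i) = 1"
    and S: "\<And>i. i < n \<Longrightarrow> is_slice A (S i)"
    and D: "D = {(\<Sum>i<n. l i *\<^sub>R s i) | s. \<forall>i<n. s i \<in> S i}"
    using assms(1) by (blast elim: is_ccsE)
  then obtain s where z: "z = (\<Sum>i<n. l i *\<^sub>R s i)" and s: "\<forall>i<n. s i \<in> S i"
    using \<open>z \<in> D\<close> by blast
  have "\<forall>i<n. s i \<in> A"
    using s S unfolding is_slice_def slice_def by blast
  then show "z \<in> A"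
    using convex_sum[OF finite_lessThan assms(2), where a=l and y=s] l unfolding z by (simp add: less_imp_le)
qed

lemma SUP_set_plus_le:
  fixes f :: "'a::real_normed_vector \<Rightarrow> real"
  assumes "linear f" "C \<noteq> {}" "U \<noteq> {}" "bdd_above (f ` C)" "bdd_above (f ` U)"
  shows "(SUP z\<in>C + U. f z) \<le> (SUP c\<in>C. f c) + (SUP u\<in>U. f u)"
proof (rule cSUP_least)
  show "C + U \<noteq> {}" using assms(2,3) by (auto simp: set_plus_def)
next
  fix z assume "z \<in> C + U"
  then obtain c u where "c \<in> C" "u \<in> U" "z = c + u" by (auto elim: set_plus_elim)
  then show "f z \<le> (SUP c\<in>C. f c) + (SUP u\<in>U. f u)"
    using assms(1,4,5) by (simp add: linear_add add_mono cSUP_upper)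
qed

lemma slice_contains_translate_of_slice:
  fixes C U :: "'a::real_normed_vector set"
  assumes C: "C \<noteq> {}" "bounded C" and U: "U \<noteq> {}" "bounded U" and "C + U \<subseteq> A"
    and SUP_le: "\<And>f :: 'a \<Rightarrow> real. bounded_linear f \<Longrightarrow>
      (SUP a\<in>A. f a) \<le> (SUP c\<in>C. f c) + (SUP u\<in>U. f u)"
    and "is_slice A S"
  shows "\<exists>T u. is_slice C T \<and> (\<lambda>c. c + u) ` T \<subseteq> S"
proof -
  obtain f \<alpha> where f: "bounded_linear f" "f \<noteq> (\<lambda>_. 0)" and "0 < \<alpha>" and S: "S = slice A f \<alpha>"
    using \<open>is_slice A S\<close> unfolding is_slice_def by blast
  have bdd: "bdd_above (f ` C)" "bdd_above (f ` U)"
    using C(2) U(2) by (auto intro: bounded_imp_bdd_above bounded_linear_image[OF _ f(1)])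
  obtain c0 where "c0 \<in> C" "(SUP c\<in>C. f c) - \<alpha> / 2 < f c0"
    using less_cSUP_iff[OF C(1) bdd(1), of "(SUP c\<in>C. f c) - \<alpha> / 2"] \<open>0 < \<alpha>\<close> by auto
  obtain u where "u \<in> U" and u: "(SUP u\<in>U. f u) - \<alpha> / 2 < f u"
    using less_cSUP_iff[OF U(1) bdd(2), of "(SUP u\<in>U. f u) - \<alpha> / 2"] \<open>0 < \<alpha>\<close> by auto
  define T where "T = slice C f (\<alpha> / 2)"
  have "is_slice C T"
    unfolding is_slice_def T_def slice_def using f \<open>0 < \<alpha>\<close> \<open>c0 \<in> C\<close> \<open>_ < f c0\<close>
    by (intro exI[of _ f] exI[of _ "\<alpha> / 2"]) auto
  moreover have "c + u \<in> S" if "c \<in> T" for c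
  proof -
    have "c \<in> C" "(SUP c\<in>C. f c) - \<alpha> / 2 < f c"
      using that unfolding T_def slice_def by auto
    then have "(SUP a\<in>A. f a) - \<alpha> < f (c + u)"
      using SUP_le[OF f(1)] u linear_add[OF bounded_linear.linear[OF f(1)]] by simp
    moreover have "c + u \<in> A" using \<open>c \<in> C\<close> \<open>u \<in> U\<close> \<open>C + U \<subseteq> A\<close> by blast
    ultimately show ?thesis unfolding S slice_def by simp
  qed
  ultimately show ?thesis by blast
qed

lemma ccs_contains_translate_of_ccs:
  assumes slices: "\<And>S. is_slice A S \<Longrightarrow> \<exists>T u. is_slice C T \<and> (\<lambda>c. c + u) ` T \<subseteq> S"
    and "is_ccs A D'"
  shows "\<exists>D y. is_ccs C D \<and> (\<lambda>d. d + y) ` D \<subseteq> D'"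
proof -
  obtain n :: nat and l S where "1 \<le> n" "\<And>i. i < n \<Longrightarrow> 0 < l i" "\<And>i. i < n \<Longrightarrow> is_slice A (S i)"
    "(\<Sum>i<n. l i) = 1" and D': "D' = {(\<Sum>i<n. l i *\<^sub>R s i) | s. \<forall>i<n. s i \<in> S i}"
    using \<open>is_ccs A D'\<close> by (blast elim: is_ccsE)
  moreover have "\<forall>i\<in>{..<n}. \<exists>T u. is_slice C T \<and> (\<lambda>c. c + u) ` T \<subseteq> S i"
    using slices calculation(3) by blast
  then obtain T u where T: "\<And>i. i < n \<Longrightarrow> is_slice C (T i)"
    and Tu: "\<And>i. i < n \<Longrightarrow> (\<lambda>c. c + u i) ` T i \<subseteq> S i"
    by (metis lessThan_iff bchoice)
  define D where "D = {(\<Sum>i<n. l i *\<^sub>R s i) | s. \<forall>i<n. s i \<in> T i}"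
  have "is_ccs C D"
    unfolding is_ccs_def D_def using calculation T by blast
  moreover have "(\<lambda>d. d + (\<Sum>i<n. l i *\<^sub>R u i)) ` D \<subseteq> D'"
  proof clarify
    fix d assume "d \<in> D"
    then obtain s where s: "d = (\<Sum>i<n. l i *\<^sub>R s i)" "\<forall>i<n. s i \<in> T i"
      unfolding D_def by blast
    have "d + (\<Sum>i<n. l i *\<^sub>R u i) = (\<Sum>i<n. l i *\<^sub>R (s i + u i))"
      unfolding s(1) by (simp add: sum.distrib scaleR_add_right)
    moreover have "\<forall>i<n. s i + u i \<in> S i" using s(2) Tu by blast
    ultimately show "d + (\<Sum>i<n. l i *\<^sub>R u i) \<in> D'"
      unfolding D' by (intro CollectI exI[of _ "\<lambda>i. s i + u i"]) simp
  qed
  ultimately show ?thesis by blast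
qed

lemma ndiam_le_of_translate_subset:
  assumes "D \<noteq> {}" "bdd_above ((\<lambda>p. N (fst p - snd p)) ` (D' \<times> D'))"
    and "(\<lambda>d. d + y) ` D \<subseteq> D'" and "0 \<le> c" "\<And>x. M x \<le> c * N x"
  shows "ndiam M D \<le> c * ndiam N D'"
proof -
  have "M (d1 - d2) \<le> c * ndiam N D'" if "d1 \<in> D" "d2 \<in> D" for d1 d2
  proof -
    have "(d1 + y, d2 + y) \<in> D' \<times> D'" using that assms(3) by blast
    then have "N ((d1 + y) - (d2 + y)) \<le> ndiam N D'"
      unfolding ndiam_def using cSUP_upper[OF _ assms(2)] by fastforce
    then show ?thesis
      using assms(4) assms(5)[of "d1 - d2"] by (simp add: mult_left_mono order_trans)
  qed
  then show ?thesis
    unfolding ndiam_def[of M] using assms(1) by (intro cSUP_least) auto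
qed

lemma symmetric_convex_body_set_plus_cball:
  fixes C :: "'a::real_normed_vector set"
  assumes "convex C" "uminus ` C = C" "C \<noteq> {}" "C \<subseteq> cball 0 \<rho>" "0 < \<delta>"
  shows "symmetric_convex_body (C + cball 0 \<delta>) \<delta> (\<rho> + \<delta>)"
proof
  have neg: "- c \<in> C" if "c \<in> C" for c
    using that assms(2) by force
  obtain c where "c \<in> C" using assms(3) by blast
  then have "0 \<in> C"
    using convexD[OF assms(1) \<open>c \<in> C\<close> neg[OF \<open>c \<in> C\<close>], of "1/2" "1/2"] by simp
  show "convex (C + cball 0 \<delta>)"
    using convex_set_plus[OF assms(1) convex_cball] .
  show "- b \<in> C + cball 0 \<delta>" if "b \<in> C + cball 0 \<delta>" for b
    using that neg by (auto simp: set_plus_def intro!: bexI[of _ "- _"])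
  show "0 < \<delta>" by (fact assms(5))
  show "0 < \<rho> + \<delta>"
    using \<open>c \<in> C\<close> assms(4,5) by (smt (verit) mem_cball_0 norm_ge_zero subsetD)
  show "cball 0 \<delta> \<subseteq> C + cball 0 \<delta>"
    using \<open>0 \<in> C\<close> by (force simp: set_plus_def)
  show "C + cball 0 \<delta> \<subseteq> cball 0 (\<rho> + \<delta>)"
    using assms(4) by (force simp: set_plus_def intro: norm_triangle_le add_mono)
qed

context symmetric_convex_body
begin

lemma slice_minkowski_ball_contains_translate:
  assumes B: "B = C + cball 0 \<delta>" and "C \<noteq> {}" "bounded C" "0 \<le> \<delta>"
    and "is_slice {x. minkowski_functional B x \<le> 1} S"
  shows "\<exists>T u. is_slice C T \<and> (\<lambda>c. c + u) ` T \<subseteq> S"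
proof (rule slice_contains_translate_of_slice[OF \<open>C \<noteq> {}\<close> \<open>bounded C\<close> _ _ _ _ assms(5)])
  show "cball 0 \<delta> \<noteq> {}" "bounded (cball 0 \<delta>)" using \<open>0 \<le> \<delta>\<close> by auto
  show "C + cball 0 \<delta> \<subseteq> {x. minkowski_functional B x \<le> 1}"
    using minkowski_functional_le_1 B by auto
  show "(SUP x\<in>{x. minkowski_functional B x \<le> 1}. f x) \<le> (SUP c\<in>C. f c) + (SUP u\<in>cball 0 \<delta>. f u)"
    if f: "bounded_linear f" for f :: "'a \<Rightarrow> real"
  proof -
    have "bdd_above (f ` C)" "bdd_above (f ` cball 0 \<delta>)"
      using bounded_linear_image[OF \<open>bounded C\<close> f] bounded_linear_image[OF bounded_cball f]
      by (auto intro: bounded_imp_bdd_above)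
    then have "(SUP b\<in>B. f b) \<le> (SUP c\<in>C. f c) + (SUP u\<in>cball 0 \<delta>. f u)"
      unfolding B using SUP_set_plus_le[OF bounded_linear.linear[OF f]] \<open>C \<noteq> {}\<close> \<open>0 \<le> \<delta>\<close> by simp
    then show ?thesis using SUP_minkowski_ball_le[OF f] by linarith
  qed
qed

lemma ndiam_ccs_minkowski_ball_ge:
  assumes "B = C + cball 0 \<delta>" "C \<noteq> {}" "bounded C" "0 \<le> \<delta>"
    and "\<And>D. is_ccs C D \<Longrightarrow> d \<le> ndiam norm D"
    and D': "is_ccs {x. minkowski_functional B x \<le> 1} D'"
  shows "d \<le> R * ndiam (minkowski_functional B) D'"
proof -
  have N: "is_norm (minkowski_functional B)"
    using equiv_norm_minkowski_functional by (simp add: equiv_norm_def)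
  obtain D y where D: "is_ccs C D" "(\<lambda>d. d + y) ` D \<subseteq> D'"
    using ccs_contains_translate_of_ccs[OF slice_minkowski_ball_contains_translate[OF assms(1-4)] D']
    by blast
  have "D' \<subseteq> {x. minkowski_functional B x \<le> 1}"
    using ccs_subset_convex[OF D' convex_norm_ball[OF N]] .
  then have "ndiam norm D \<le> R * ndiam (minkowski_functional B) D'"
    using norm_div_le_minkowski_functional R_pos
    by (intro ndiam_le_of_translate_subset[OF ccs_nonempty[OF D(1)] bdd_above_norm_diffs[OF N] D(2)])
      (auto simp: divide_le_eq mult.commute)
  then show ?thesis using assms(5)[OF D(1)] by linarith
qed

end

theorem mainTheorem12:
  fixes C :: "'a::banach set"
  assumes "C \<noteq> {}" and "C \<subseteq> cball 0 1" and "convex C" and "uminus ` C = C"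
    and "closed C"
    and "\<And>D. is_ccs C D \<Longrightarrow> ndiam norm D = 2"
  shows "\<forall>\<epsilon>>0. \<exists>N::'a \<Rightarrow> real. equiv_norm N \<and>
           (\<forall>D. is_ccs {x. N x \<le> 1} D \<longrightarrow> ndiam N D \<ge> 2 - \<epsilon>)"
proof (intro allI impI)
  fix \<epsilon> :: real assume "0 < \<epsilon>"
  define \<delta> where "\<delta> = \<epsilon> / 2"
  define B where "B = C + cball 0 \<delta>"
  have "0 < \<delta>" using \<open>0 < \<epsilon>\<close> by (simp add: \<delta>_def)
  interpret symmetric_convex_body B \<delta> "1 + \<delta>"
    unfolding B_def using symmetric_convex_body_set_plus_cball assms(1-4) \<open>0 < \<delta>\<close> by blast
  have "bounded C" using assms(2) bounded_subset by blast
  have "2 - \<epsilon> \<le> ndiam (minkowski_functional B) D'"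
    if "is_ccs {x. minkowski_functional B x \<le> 1} D'" for D'
  proof -
    have "2 \<le> (1 + \<delta>) * ndiam (minkowski_functional B) D'"
      using ndiam_ccs_minkowski_ball_ge[OF B_def assms(1) \<open>bounded C\<close> _ _ that] assms(6) \<open>0 < \<delta>\<close>
      by simp
    moreover have "(1 + \<delta>) * (2 - \<epsilon>) \<le> 2"
      unfolding \<delta>_def by (simp add: algebra_simps)
    ultimately show ?thesis
      using \<open>0 < \<delta>\<close> by (smt (verit) mult_le_cancel_left_pos)
  qed
  then show "\<exists>N::'a \<Rightarrow> real. equiv_norm N \<and> (\<forall>D. is_ccs {x. N x \<le> 1} D \<longrightarrow> ndiam N D \<ge> 2 - \<epsilon>)"
    using equiv_norm_minkowski_functional by blast
qed

end
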